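(* (i) Let $\mathbf G=(G,\le,\cdot,\to,0,1)$ be a contrapositionally residuated po-groupoid and define $x/y:={\sim}x\to{\sim}y$. Then $\mathbf G'=(G,\le,\cdot,/,0,1)$ is a left-residuated po-groupoid satisfying the double negation law $\neg\neg x=x$ (where $\neg x:=0/x$); moreover $\neg x={\sim}x$ and $\neg x/\neg y=x\to y$ for all $x,y\in G$. (ii) Conversely, let $\mathbf G=(G,\le,\cdot,/,0,1)$ be a left-residuated po-groupoid satisfying $\neg\neg x=x$, and define $x\to y:=\neg x/\neg y$. Then $(G,\le,\cdot,\to,0,1)$ is a contrapositionally residuated po-groupoid, with ${\sim}x=\neg x$ and ${\sim}x\to{\sim}y=x/y$ for all $x,y\in G$. Hence contrapositionally residuated po-groupoids are equivalent (via these mutually inverse translations) to left-residuated po-groupoids satisfying the double negation law.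
   Context: A (bounded integral) left-residuated po-groupoid is a structure $\mathbf G=(G,\le,\cdot,/,0,1)$ where $(G,\le,0,1)$ is a bounded poset with least element $0$ and greatest element $1$, $\cdot$ is a binary operation on $G$ with $1\cdot x=x\cdot 1=x$ for all $x$ (no associativity, commutativity or monotonicity is assumed), and $/$ is a binary operation on $G$ satisfying the left residuation law: for all $x,y,z\in G$, $x\cdot y\le z\iff x\le z/y$. Its negation is $\neg x:=0/x$. A (bounded integral) contrapositionally residuated po-groupoid is a structure $\mathbf G=(G,\le,\cdot,\to,0,1)$ where $(G,\le,0,1)$ is a bounded poset with least element $0$ and greatest element $1$, $(G,\cdot,1)$ is a groupoid with identity $1$, and $\to$ is a binary operation such that for all $x,y,z\in G$: $1\to x=x$, and $x\cdot y\le z$ iff $x\le {\sim}z\to{\sim}y$, where ${\sim}x:=x\to 0$. *)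

theory Defs
  imports Main
begin

text \<open>The carrier G is represented by a type 'a; the order by le, multiplication
by m, the residual (/ or \<rightarrow>) by a binary operation, 0 by z and 1 by u.\<close>

definition bounded_poset :: "('a \<Rightarrow> 'a \<Rightarrow> bool) \<Rightarrow> 'a \<Rightarrow> 'a \<Rightarrow> bool" where
  "bounded_poset le z u \<longleftrightarrow>
     (\<forall>x. le x x) \<and> (\<forall>x y. le x y \<and> le y x \<longrightarrow> x = y) \<and>
     (\<forall>x y w. le x y \<and> le y w \<longrightarrow> le x w) \<and> (\<forall>x. le z x \<and> le x u)"

definition left_residuated_po_groupoid ::
  "('a \<Rightarrow> 'a \<Rightarrow> bool) \<Rightarrow> ('a \<Rightarrow> 'a \<Rightarrow> 'a) \<Rightarrow> ('a \<Rightarrow> 'a \<Rightarrow> 'a) \<Rightarrow> 'a \<Rightarrow> 'a \<Rightarrow> bool" where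
  "left_residuated_po_groupoid le m r z u \<longleftrightarrow>
     bounded_poset le z u \<and> (\<forall>x. m u x = x \<and> m x u = x) \<and>
     (\<forall>x y w. le (m x y) w \<longleftrightarrow> le x (r w y))"

definition contrap_residuated_po_groupoid ::
  "('a \<Rightarrow> 'a \<Rightarrow> bool) \<Rightarrow> ('a \<Rightarrow> 'a \<Rightarrow> 'a) \<Rightarrow> ('a \<Rightarrow> 'a \<Rightarrow> 'a) \<Rightarrow> 'a \<Rightarrow> 'a \<Rightarrow> bool" where
  "contrap_residuated_po_groupoid le m i z u \<longleftrightarrow>
     bounded_poset le z u \<and> (\<forall>x. m u x = x \<and> m x u = x) \<and>
     (\<forall>x. i u x = x) \<and>
     (\<forall>x y w. le (m x y) w \<longleftrightarrow> le x (i (i w z) (i y z)))"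

end

theory Submission
  imports Defs
begin

text \<open>In both kinds of structure, residuating by the unit is the identity: \<open>x \<cdot> 1 = x\<close>
  gives \<open>x \<le> w \<longleftrightarrow> x \<le> w/1\<close>, and a poset element is determined by its lower bounds.
  For a contrapositional residual \<open>w/1\<close> is \<open>\<sim>w \<rightarrow> \<sim>1 = \<sim>w \<rightarrow> 0 = \<sim>\<sim>w\<close>, which yields the double
  negation law there; in the other direction the double negation law is assumed. With
  \<open>\<sim>\<sim>x = x\<close> and \<open>\<sim>0 = 1\<close> the two translations become mutually inverse by rewriting.\<close>

lemma bounded_poset_eq_if_same_lower_bounds:
  assumes "bounded_poset le z u" and "\<And>x. le x a \<longleftrightarrow> le x b"
  shows "a = b"
  using assms unfolding bounded_poset_def by metis

lemma left_residuated_residual_unit: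
  assumes "left_residuated_po_groupoid le m r z u"
  shows "r w u = w"
proof (rule bounded_poset_eq_if_same_lower_bounds)
  show "bounded_poset le z u"
    using assms unfolding left_residuated_po_groupoid_def by simp
  show "le x (r w u) \<longleftrightarrow> le x w" for x
    using assms unfolding left_residuated_po_groupoid_def by metis
qed

lemma contrap_residuated_double_neg:
  assumes "contrap_residuated_po_groupoid le m i z u"
  shows "i (i w z) z = w"
proof (rule bounded_poset_eq_if_same_lower_bounds)
  show "bounded_poset le z u"
    using assms unfolding contrap_residuated_po_groupoid_def by simp
  show "le x (i (i w z) z) \<longleftrightarrow> le x w" for x
    using assms unfolding contrap_residuated_po_groupoid_def by metis
qed

lemma contrap_residuated_neg_zero:
  assumes "contrap_residuated_po_groupoid le m i z u"
  shows "i z z = u"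
  using contrap_residuated_double_neg [OF assms, of u] assms
  unfolding contrap_residuated_po_groupoid_def by simp

lemma contrap_residuated_imp_left_residuated:
  assumes G: "contrap_residuated_po_groupoid le m i z u"
  defines "r \<equiv> \<lambda>x y. i (i x z) (i y z)"
  shows "left_residuated_po_groupoid le m r z u"
    and "r z (r z x) = x"
    and "r z x = i x z"
    and "r (r z x) (r z y) = i x y"
proof -
  have neg: "r z x = i x z" for x
    using G contrap_residuated_neg_zero [OF G]
    unfolding r_def contrap_residuated_po_groupoid_def by simp
  then show "r z x = i x z" .
  show "r z (r z x) = x"
    using neg contrap_residuated_double_neg [OF G] by simp
  show "r (r z x) (r z y) = i x y"
    using neg contrap_residuated_double_neg [OF G] by (simp add: r_def)
  show "left_residuated_po_groupoid le m r z u"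
    using G unfolding r_def contrap_residuated_po_groupoid_def left_residuated_po_groupoid_def
    by simp
qed

lemma left_residuated_double_neg_imp_contrap_residuated:
  assumes G: "left_residuated_po_groupoid le m r z u" and dn: "\<And>x. r z (r z x) = x"
  defines "i \<equiv> \<lambda>x y. r (r z x) (r z y)"
  shows "contrap_residuated_po_groupoid le m i z u"
    and "i x z = r z x"
    and "i (i x z) (i y z) = r x y"
proof -
  have neg_zero: "r z z = u"
    using dn [of u] left_residuated_residual_unit [OF G, of z] by simp
  have neg: "i x z = r z x" for x
    using neg_zero left_residuated_residual_unit [OF G] by (simp add: i_def)
  then show "i x z = r z x" .
  show contrap: "i (i x z) (i y z) = r x y" for x y
    using neg dn by (simp add: i_def)
  have "i u x = x" for x
    using dn left_residuated_residual_unit [OF G, of z] by (simp add: i_def)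
  then show "contrap_residuated_po_groupoid le m i z u"
    using G contrap
    unfolding contrap_residuated_po_groupoid_def left_residuated_po_groupoid_def by simp
qed

theorem mainTheorem8:
  fixes le :: "'a \<Rightarrow> 'a \<Rightarrow> bool" and m :: "'a \<Rightarrow> 'a \<Rightarrow> 'a" and z u :: 'a
  shows "(\<forall>i :: 'a \<Rightarrow> 'a \<Rightarrow> 'a. contrap_residuated_po_groupoid le m i z u \<longrightarrow>
            (let r = (\<lambda>x y. i (i x z) (i y z)) in
              left_residuated_po_groupoid le m r z u \<and>
              (\<forall>x. r z (r z x) = x) \<and>
              (\<forall>x. r z x = i x z) \<and>
              (\<forall>x y. r (r z x) (r z y) = i x y)))
       \<and> (\<forall>r :: 'a \<Rightarrow> 'a \<Rightarrow> 'a. left_residuated_po_groupoid le m r z u \<and> (\<forall>x. r z (r z x) = x) \<longrightarrow>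
            (let i = (\<lambda>x y. r (r z x) (r z y)) in
              contrap_residuated_po_groupoid le m i z u \<and>
              (\<forall>x. i x z = r z x) \<and>
              (\<forall>x y. i (i x z) (i y z) = r x y)))"
proof (intro conjI allI impI)
  fix i :: "'a \<Rightarrow> 'a \<Rightarrow> 'a"
  assume "contrap_residuated_po_groupoid le m i z u"
  from contrap_residuated_imp_left_residuated [OF this]
  show "let r = \<lambda>x y. i (i x z) (i y z) in
          left_residuated_po_groupoid le m r z u \<and> (\<forall>x. r z (r z x) = x) \<and>
          (\<forall>x. r z x = i x z) \<and> (\<forall>x y. r (r z x) (r z y) = i x y)"
    unfolding Let_def by blast
next
  fix r :: "'a \<Rightarrow> 'a \<Rightarrow> 'a"
  assume "left_residuated_po_groupoid le m r z u \<and> (\<forall>x. r z (r z x) = x)"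
  then have "left_residuated_po_groupoid le m r z u" and "\<And>x. r z (r z x) = x"
    by simp_all
  from left_residuated_double_neg_imp_contrap_residuated [OF this]
  show "let i = \<lambda>x y. r (r z x) (r z y) in
          contrap_residuated_po_groupoid le m i z u \<and> (\<forall>x. i x z = r z x) \<and>
          (\<forall>x y. i (i x z) (i y z) = r x y)"
    unfolding Let_def by blast
qed

end
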